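(* Consider the one-hidden-layer network and empirical squared loss $\mathcal{L}$ described in the context (with $d>1$ and $\alpha^+\neq\alpha^-$). Let $\overline{\mathbf{P}}\in\mathbb{R}^D$ be a stationary point of $\mathcal{L}$. If no hidden neuron $i\in I$ is an escape neuron at $\overline{\mathbf{P}}$, then $\overline{\mathbf{P}}$ is a local minimum of $\mathcal{L}$. Moreover, when $|J|=1$, the converse also holds: if $\overline{\mathbf{P}}$ is a stationary point that is a local minimum of $\mathcal{L}$, then no hidden neuron is an escape neuron at $\overline{\mathbf{P}}$.
   Context: Fix an integer $d>1$, finite nonempty index sets $I$ (hidden neurons), $J$ (output neurons), $K$ (training samples), and reals $\alpha^+\neq\alpha^-$. Let $\rho(z)=\alpha^+ z$ for $z\ge 0$ and $\rho(z)=\alpha^- z$ for $z<0$, applied componentwise to vectors. The parameters are $\mathbf{P}=(W,H)\in\mathbb{R}^D$, $D=|J||I|+|I|d$, where $W\in\mathbb{R}^{|I|\times d}$ has rows $\mathbf{w}_i\in\mathbb{R}^d$ ($i\in I$) and $H=(h_{ji})\in\mathbb{R}^{|J|\times|I|}$. The network output on input $\mathbf{x}\in\mathbb{R}^d$ is $\hat{\mathbf{y}}(\mathbf{P};\mathbf{x})=H\rho(W\mathbf{x})$. Given training data $\mathbf{x}_k\in\mathbb{R}^d$, $\mathbf{y}_k\in\mathbb{R}^{|J|}$ ($k\in K$), the loss is $\mathcal{L}(\mathbf{P})=\frac12\sum_{k\in K}\|\hat{\mathbf{y}}(\mathbf{P};\mathbf{x}_k)-\mathbf{y}_k\|^2$.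 Write $\hat y_{kj}$ for the $j$-th component of $\hat{\mathbf{y}}(\mathbf{P};\mathbf{x}_k)$ and $e_{kj}=\hat y_{kj}-y_{kj}$. Stationary point: $\overline{\mathbf{P}}$ is a stationary point if $\lim_{\alpha\to0^+}\frac{\mathcal{L}(\overline{\mathbf{P}}+\alpha\mathbf{d})-\mathcal{L}(\overline{\mathbf{P}})}{\alpha}\ge 0$ for every $\mathbf{d}\in\mathbb{R}^D$. Tangential directions: if $\mathbf{w}_i\neq\mathbf{0}$, a tangential direction of $\mathbf{w}_i$ is any unit vector $\mathbf{v}_i\in\mathbb{R}^d$ with $\mathbf{v}_i\cdot\mathbf{w}_i=0$; if $\mathbf{w}_i=\mathbf{0}$, it is any unit vector $\mathbf{v}_i\in\mathbb{R}^d$. For a tangential direction $\mathbf{v}_i$, define $\mathbf{d}_{ji}^{\mathbf{v}_i}=\lim_{\Delta\to0^+}\Big(\sum_{k:(\mathbf{w}_i+\Delta\mathbf{v}_i)\cdot\mathbf{x}_k>0}\alpha^+e_{kj}\mathbf{x}_k+\sum_{k:(\mathbf{w}_i+\Delta\mathbf{v}_i)\cdot\mathbf{x}_k<0}\alpha^-e_{kj}\mathbf{x}_k\Big)$ (the index sets are constant for all small $\Delta>0$); the tangential derivative of $\mathcal{L}$ at $\mathbf{P}$ in direction $\mathbf{v}_i$ (only $\mathbf{w}_i$ moved) equals $\sum_{j\in J}h_{ji}\mathbf{d}_{ji}^{\mathbf{v}_i}\cdot\mathbf{v}_i$. Escape neuron: at a stationary point $\overline{\mathbf{P}}$ (with weights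 $\overline{\mathbf{w}}_i,\overline{h}_{ji}$ and the quantities above evaluated at $\overline{\mathbf{P}}$), hidden neuron $i$ is an escape neuron iff there exist $j'\in J$ and a tangential direction $\mathbf{v}_i$ of $\overline{\mathbf{w}}_i$ with $\sum_{j\in J}\overline{h}_{ji}\mathbf{d}_{ji}^{\mathbf{v}_i}\cdot\mathbf{v}_i=0$ and $\mathbf{d}_{j'i}^{\mathbf{v}_i}\cdot\mathbf{v}_i\neq0$. *)

theory Defs
  imports "HOL-Analysis.Analysis"
begin

text \<open>Conventions: the hidden neurons, output neurons and training samples are the
  finite (nonempty) types 'i, 'j, 'k; the input space is real^'n with d = CARD('n).
  A parameter P = (W, H) consists of W :: (real^'n)^'i (rows w_i) and
  H :: real^'i^'j (entries h_ji), so the parameter space is a Euclidean space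
  of dimension |J||I| + |I|d.\<close>

definition leaky :: "real \<Rightarrow> real \<Rightarrow> real \<Rightarrow> real" where
  "leaky ap am z = (if z \<ge> 0 then ap * z else am * z)"

definition net_out ::
  "real \<Rightarrow> real \<Rightarrow> ((real^'n)^'i) \<times> (real^'i^'j) \<Rightarrow> real^'n \<Rightarrow> real^'j" where
  "net_out ap am P x = (\<chi> j. \<Sum>i\<in>UNIV. (snd P $ j $ i) * leaky ap am ((fst P $ i) \<bullet> x))"

definition loss ::
  "real \<Rightarrow> real \<Rightarrow> ('k::finite \<Rightarrow> real^'n) \<Rightarrow> ('k \<Rightarrow> real^'j)
   \<Rightarrow> ((real^'n)^'i) \<times> (real^'i^'j) \<Rightarrow> real" where
  "loss ap am xs ys P = (1/2) * (\<Sum>k\<in>UNIV. (norm (net_out ap am P (xs k) - ys k))\<^sup>2)"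

definition resid ::
  "real \<Rightarrow> real \<Rightarrow> ('k::finite \<Rightarrow> real^'n) \<Rightarrow> ('k \<Rightarrow> real^'j)
   \<Rightarrow> ((real^'n)^'i) \<times> (real^'i^'j) \<Rightarrow> 'k \<Rightarrow> 'j \<Rightarrow> real" where
  "resid ap am xs ys P k j = net_out ap am P (xs k) $ j - ys k $ j"

definition stationary ::
  "(((real^'n)^'i) \<times> (real^'i^'j) \<Rightarrow> real) \<Rightarrow> ((real^'n)^'i) \<times> (real^'i^'j) \<Rightarrow> bool" where
  "stationary L P \<longleftrightarrow>
     (\<forall>d. \<exists>l. ((\<lambda>\<alpha>. (L (P + \<alpha> *\<^sub>R d) - L P) / \<alpha>) \<longlongrightarrow> l) (at_right 0) \<and> l \<ge> 0)"

definition local_minimum ::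
  "(((real^'n)^'i) \<times> (real^'i^'j) \<Rightarrow> real) \<Rightarrow> ((real^'n)^'i) \<times> (real^'i^'j) \<Rightarrow> bool" where
  "local_minimum L P \<longleftrightarrow> (\<exists>e>0. \<forall>Q. dist Q P < e \<longrightarrow> L P \<le> L Q)"

definition tangential :: "real^'n \<Rightarrow> real^'n \<Rightarrow> bool" where
  "tangential w v \<longleftrightarrow> norm v = 1 \<and> (w \<noteq> 0 \<longrightarrow> v \<bullet> w = 0)"

definition dvec ::
  "real \<Rightarrow> real \<Rightarrow> ('k::finite \<Rightarrow> real^'n) \<Rightarrow> ('k \<Rightarrow> real^'j)
   \<Rightarrow> ((real^'n)^'i) \<times> (real^'i^'j) \<Rightarrow> 'j \<Rightarrow> 'i \<Rightarrow> real^'n \<Rightarrow> real^'n" where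
  "dvec ap am xs ys P j i v =
     Lim (at_right 0) (\<lambda>\<Delta>.
        (\<Sum>k\<in>{k. (fst P $ i + \<Delta> *\<^sub>R v) \<bullet> xs k > 0}. (ap * resid ap am xs ys P k j) *\<^sub>R xs k)
      + (\<Sum>k\<in>{k. (fst P $ i + \<Delta> *\<^sub>R v) \<bullet> xs k < 0}. (am * resid ap am xs ys P k j) *\<^sub>R xs k))"

definition escape_neuron ::
  "real \<Rightarrow> real \<Rightarrow> ('k::finite \<Rightarrow> real^'n) \<Rightarrow> ('k \<Rightarrow> real^'j)
   \<Rightarrow> ((real^'n)^'i) \<times> (real^'i^'j) \<Rightarrow> 'i \<Rightarrow> bool" where
  "escape_neuron ap am xs ys P i \<longleftrightarrow>
     (\<exists>j' v. tangential (fst P $ i) v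
        \<and> (\<Sum>j\<in>UNIV. snd P $ j $ i * (dvec ap am xs ys P j i v \<bullet> v)) = 0
        \<and> dvec ap am xs ys P j' i v \<bullet> v \<noteq> 0)"

end

theory Submission
  imports Defs
begin

(* Near a parameter P the network is exactly piecewise linear in W, so L Q - L P is a
   first-order term plus a sum of squares.  By stationarity the first-order term is
   \<Sum>i \<Sum>j h'_ji c_ij(\<delta>_i), where c_ij(\<delta>) is the one-sided derivative, in the direction
   \<delta> of the weight w_i, of the correlation between the j-th residual and the activation
   of neuron i, and \<Sum>j h_ji c_ij(\<delta>) \<ge> 0.  If neuron i is not an escape neuron, c_ij(\<delta>)
   vanishes whenever \<Sum>j h_ji c_ij(\<delta>) does; both are linear on each of finitely many
   polyhedral cones, so Farkas' lemma upgrades this to |c_ij(\<delta>)| \<le> K \<Sum>j h_ji c_ij(\<delta>), and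
   the first-order term stays nonnegative for H' close to H.
   Conversely, with a single output an escape neuron i has h_i = 0 and c_i(v) \<noteq> 0 for a
   tangential v: moving w_i along v and switching h_i on with the sign opposite to c_i(v)
   decreases the loss. *)

section \<open>Local linearity of the network\<close>

definition leaky_deriv :: "real \<Rightarrow> real \<Rightarrow> real \<Rightarrow> real \<Rightarrow> real" where
  "leaky_deriv ap am z t = (if z = 0 then leaky ap am t else (if z > 0 then ap else am) * t)"

lemma leaky_0 [simp]: "leaky ap am 0 = 0"
  by (simp add: leaky_def)

lemma leaky_pos_mult: "0 \<le> b \<Longrightarrow> leaky ap am (b * z) = b * leaky ap am z"
  by (cases "b = 0") (auto simp: leaky_def zero_le_mult_iff)

lemma leaky_deriv_0 [simp]: "leaky_deriv ap am z 0 = 0"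
  by (simp add: leaky_deriv_def)

lemma leaky_add_leaky_deriv:
  "z = 0 \<or> \<bar>t\<bar> < \<bar>z\<bar> \<Longrightarrow> leaky ap am (z + t) = leaky ap am z + leaky_deriv ap am z t"
  by (auto simp: leaky_def leaky_deriv_def algebra_simps)

lemma leaky_deriv_add_scaled:
  assumes "0 \<le> b"
  shows "leaky_deriv ap am z (a * z + b * t) = a * leaky ap am z + b * leaky_deriv ap am z t"
proof (cases "z = 0")
  case True
  then show ?thesis by (simp add: leaky_deriv_def leaky_pos_mult assms)
qed (auto simp: leaky_deriv_def leaky_def algebra_simps)

lemma leaky_deriv_pos_mult: "0 \<le> b \<Longrightarrow> leaky_deriv ap am z (b * t) = b * leaky_deriv ap am z t"
  using leaky_deriv_add_scaled[of b ap am z 0 t] by simp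

lemma eventually_leaky_expansion:
  fixes xs :: "'k::finite \<Rightarrow> 'a::real_inner"
  assumes "(\<delta> \<longlongrightarrow> 0) F"
  shows "\<forall>\<^sub>F u in F. \<forall>k. leaky ap am ((w + \<delta> u) \<bullet> xs k)
           = leaky ap am (w \<bullet> xs k) + leaky_deriv ap am (w \<bullet> xs k) (\<delta> u \<bullet> xs k)"
proof (rule eventually_all_finite)
  fix k
  have "((\<lambda>u. \<bar>\<delta> u \<bullet> xs k\<bar>) \<longlongrightarrow> 0) F"
    using tendsto_rabs[OF tendsto_inner[OF assms tendsto_const]] by simp
  then have "\<forall>\<^sub>F u in F. w \<bullet> xs k = 0 \<or> \<bar>\<delta> u \<bullet> xs k\<bar> < \<bar>w \<bullet> xs k\<bar>"
    by (cases "w \<bullet> xs k = 0") (simp_all add: order_tendstoD(2) eventually_mono)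
  then show "\<forall>\<^sub>F u in F. leaky ap am ((w + \<delta> u) \<bullet> xs k)
           = leaky ap am (w \<bullet> xs k) + leaky_deriv ap am (w \<bullet> xs k) (\<delta> u \<bullet> xs k)"
    by (rule eventually_mono) (simp add: inner_add_left leaky_add_leaky_deriv)
qed

lemma eventually_sign_right:
  fixes z t :: real
  shows "\<forall>\<^sub>F \<Delta> in at_right 0. (0 < z + \<Delta> * t \<longleftrightarrow> 0 < z \<or> z = 0 \<and> 0 < t)
    \<and> (z + \<Delta> * t < 0 \<longleftrightarrow> z < 0 \<or> z = 0 \<and> t < 0)"
proof -
  have lim: "((\<lambda>\<Delta>. z + \<Delta> * t) \<longlongrightarrow> z) (at_right 0)"
    by (intro tendsto_eq_intros) auto
  consider "0 < z" | "z < 0" | "z = 0" by linarith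
  then show ?thesis
  proof cases
    case 1
    with order_tendstoD(1)[OF lim 1] show ?thesis
      by (auto elim: eventually_mono)
  next
    case 2
    with order_tendstoD(2)[OF lim 2] show ?thesis
      by (auto elim: eventually_mono)
  next
    case 3
    with eventually_at_right_less[of "0::real"] show ?thesis
      by (auto elim!: eventually_mono simp: zero_less_mult_iff mult_less_0_iff)
  qed
qed

lemma eventually_net_out_expansion:
  fixes xs :: "'k::finite \<Rightarrow> real^'n" and Q :: "'a \<Rightarrow> ((real^'n)^'i) \<times> (real^'i^'j)"
  assumes "(Q \<longlongrightarrow> P) F"
  shows "\<forall>\<^sub>F u in F. \<forall>k j. net_out ap am (Q u) (xs k) $ j - net_out ap am P (xs k) $ j
     = (\<Sum>i\<in>UNIV. snd (Q u) $ j $ i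
            * leaky_deriv ap am (fst P $ i \<bullet> xs k) ((fst (Q u) $ i - fst P $ i) \<bullet> xs k)
          + (snd (Q u) $ j $ i - snd P $ j $ i) * leaky ap am (fst P $ i \<bullet> xs k))"
proof -
  have expansion: "\<forall>\<^sub>F u in F. \<forall>k. leaky ap am (fst (Q u) $ i \<bullet> xs k)
      = leaky ap am (fst P $ i \<bullet> xs k)
        + leaky_deriv ap am (fst P $ i \<bullet> xs k) ((fst (Q u) $ i - fst P $ i) \<bullet> xs k)" for i
  proof -
    have "((\<lambda>u. fst (Q u) $ i - fst P $ i) \<longlongrightarrow> 0) F"
      using assms by (intro tendsto_eq_intros) auto
    from eventually_leaky_expansion[OF this, of ap am "fst P $ i" xs] show ?thesis
      by simp
  qed
  have "\<forall>\<^sub>F u in F. \<forall>i k. leaky ap am (fst (Q u) $ i \<bullet> xs k)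
      = leaky ap am (fst P $ i \<bullet> xs k)
        + leaky_deriv ap am (fst P $ i \<bullet> xs k) ((fst (Q u) $ i - fst P $ i) \<bullet> xs k)"
    by (rule eventually_all_finite) (rule expansion)
  then show ?thesis
    by (rule eventually_mono) (simp add: net_out_def sum_subtractf[symmetric] algebra_simps)
qed

lemma eventually_net_out_along_ray:
  fixes xs :: "'k::finite \<Rightarrow> real^'n" and P d :: "((real^'n)^'i) \<times> (real^'i^'j)"
  shows "\<forall>\<^sub>F \<alpha> in at_right 0. \<forall>k j.
    net_out ap am (P + \<alpha> *\<^sub>R d) (xs k) $ j - net_out ap am P (xs k) $ j
      = \<alpha> * (\<Sum>i\<in>UNIV. snd P $ j $ i * leaky_deriv ap am (fst P $ i \<bullet> xs k) (fst d $ i \<bullet> xs k)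
                      + snd d $ j $ i * leaky ap am (fst P $ i \<bullet> xs k))
      + \<alpha>\<^sup>2 * (\<Sum>i\<in>UNIV. snd d $ j $ i * leaky_deriv ap am (fst P $ i \<bullet> xs k) (fst d $ i \<bullet> xs k))"
proof -
  have "((\<lambda>\<alpha>. P + \<alpha> *\<^sub>R d) \<longlongrightarrow> P) (at_right 0)"
    by (intro tendsto_eq_intros) auto
  from eventually_net_out_expansion[OF this, of ap am xs] eventually_at_right_less[of "0::real"]
  show ?thesis
  proof eventually_elim
    case (elim \<alpha>)
    then have "net_out ap am (P + \<alpha> *\<^sub>R d) (xs k) $ j - net_out ap am P (xs k) $ j
      = (\<Sum>i\<in>UNIV. (snd P $ j $ i + \<alpha> * snd d $ j $ i)
            * (\<alpha> * leaky_deriv ap am (fst P $ i \<bullet> xs k) (fst d $ i \<bullet> xs k))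
          + \<alpha> * snd d $ j $ i * leaky ap am (fst P $ i \<bullet> xs k))" for k j
      by (simp add: leaky_deriv_pos_mult)
    then show ?case
      by (simp add: sum_distrib_left sum.distrib[symmetric] power2_eq_square algebra_simps)
  qed
qed

section \<open>Farkas' lemma and ratio bounds on polyhedral cones\<close>

lemma farkas_convex_cone_hull:
  fixes G :: "'a::euclidean_space set"
  assumes "finite G" and dual: "\<And>\<delta>. \<forall>g\<in>G. 0 \<le> g \<bullet> \<delta> \<Longrightarrow> 0 \<le> z \<bullet> \<delta>"
  shows "z \<in> convex_cone hull G"
proof (rule ccontr)
  let ?S = "convex_cone hull G"
  assume "z \<notin> ?S"
  moreover have "closed ?S" "convex ?S"
    using closed_convex_cone_hull[OF \<open>finite G\<close>] convex_convex_cone_hull by auto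
  ultimately obtain u b where ub: "u \<bullet> z < b" "\<forall>x\<in>?S. b < u \<bullet> x"
    using separating_hyperplane_closed_point by blast
  have "b < 0"
    using ub(2) convex_cone_hull_contains_0 by fastforce
  have "0 \<le> u \<bullet> x" if "x \<in> ?S" for x
  proof (rule ccontr)
    assume "\<not> 0 \<le> u \<bullet> x"
    then have "(b / (u \<bullet> x)) *\<^sub>R x \<in> ?S"
      using \<open>b < 0\<close> that by (intro convex_cone_hull_mul) (auto simp: divide_nonpos_neg)
    with ub(2) \<open>\<not> 0 \<le> u \<bullet> x\<close> show False
      by fastforce
  qed
  then have "\<forall>g\<in>G. 0 \<le> g \<bullet> u"
    by (simp add: hull_inc inner_commute)
  with dual ub(1) \<open>b < 0\<close> show False
    by (fastforce simp: inner_commute)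
qed

lemma inner_le_multiple_on_cone:
  fixes G :: "'a::euclidean_space set"
  assumes "finite G"
    and "\<And>\<delta>. \<forall>g\<in>G. 0 \<le> g \<bullet> \<delta> \<Longrightarrow> a \<bullet> \<delta> \<le> 0 \<Longrightarrow> c \<bullet> \<delta> \<le> 0"
  shows "\<exists>K\<ge>0. \<forall>\<delta>. (\<forall>g\<in>G. 0 \<le> g \<bullet> \<delta>) \<longrightarrow> c \<bullet> \<delta> \<le> K * (a \<bullet> \<delta>)"
proof -
  \<comment> \<open>By Farkas, -c is a nonnegative combination of -a and G, and every such combination z
      satisfies z \<bullet> \<delta> \<ge> -K (a \<bullet> \<delta>) on the cone.\<close>
  define Z where "Z = {z. \<exists>K\<ge>0. \<forall>\<delta>. (\<forall>g\<in>G. 0 \<le> g \<bullet> \<delta>) \<longrightarrow> 0 \<le> z \<bullet> \<delta> + K * (a \<bullet> \<delta>)}"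
  have "- c \<in> convex_cone hull (insert (- a) G)"
    using assms by (intro farkas_convex_cone_hull) force+
  moreover have "convex_cone hull (insert (- a) G) \<subseteq> Z"
  proof (rule hull_minimal)
    have "- a \<in> Z"
      unfolding Z_def by (intro CollectI exI[of _ 1]) simp
    moreover have "G \<subseteq> Z"
      unfolding Z_def by (auto intro!: exI[of _ 0] simp: inner_commute)
    ultimately show "insert (- a) G \<subseteq> Z"
      by simp
    show "convex_cone Z"
      unfolding convex_cone_iff
    proof (intro conjI ballI allI impI)
      show "0 \<in> Z"
        unfolding Z_def by auto
    next
      fix x y assume "x \<in> Z" "y \<in> Z"
      then obtain K1 K2 where "K1 \<ge> 0" "K2 \<ge> 0"
        "\<forall>\<delta>. (\<forall>g\<in>G. 0 \<le> g \<bullet> \<delta>) \<longrightarrow> 0 \<le> x \<bullet> \<delta> + K1 * (a \<bullet> \<delta>)"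
        "\<forall>\<delta>. (\<forall>g\<in>G. 0 \<le> g \<bullet> \<delta>) \<longrightarrow> 0 \<le> y \<bullet> \<delta> + K2 * (a \<bullet> \<delta>)"
        unfolding Z_def by blast
      then show "x + y \<in> Z"
        unfolding Z_def
        by (intro CollectI exI[of _ "K1 + K2"]) (force simp: inner_add_left algebra_simps)
    next
      fix x and t :: real assume "x \<in> Z" "0 \<le> t"
      then obtain K where "K \<ge> 0" and K: "\<forall>\<delta>. (\<forall>g\<in>G. 0 \<le> g \<bullet> \<delta>) \<longrightarrow> 0 \<le> x \<bullet> \<delta> + K * (a \<bullet> \<delta>)"
        unfolding Z_def by blast
      have "0 \<le> (t *\<^sub>R x) \<bullet> \<delta> + (t * K) * (a \<bullet> \<delta>)" if "\<forall>g\<in>G. 0 \<le> g \<bullet> \<delta>" for \<delta>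
      proof -
        have "0 \<le> t * (x \<bullet> \<delta> + K * (a \<bullet> \<delta>))"
          using K that \<open>0 \<le> t\<close> by simp
        then show ?thesis
          by (simp add: algebra_simps)
      qed
      with \<open>K \<ge> 0\<close> \<open>0 \<le> t\<close> show "t *\<^sub>R x \<in> Z"
        unfolding Z_def by (intro CollectI exI[of _ "t * K"]) auto
    qed
  qed
  ultimately have "- c \<in> Z"
    by blast
  then show ?thesis
    by (auto simp: Z_def)
qed

lemma abs_inner_le_multiple_on_cone:
  fixes G :: "'a::euclidean_space set"
  assumes "finite G"
    and "\<And>\<delta>. \<forall>g\<in>G. 0 \<le> g \<bullet> \<delta> \<Longrightarrow> 0 \<le> a \<bullet> \<delta>"
    and "\<And>\<delta>. \<forall>g\<in>G. 0 \<le> g \<bullet> \<delta> \<Longrightarrow> a \<bullet> \<delta> = 0 \<Longrightarrow> c \<bullet> \<delta> = 0"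
  shows "\<exists>K\<ge>0. \<forall>\<delta>. (\<forall>g\<in>G. 0 \<le> g \<bullet> \<delta>) \<longrightarrow> \<bar>c \<bullet> \<delta>\<bar> \<le> K * (a \<bullet> \<delta>)"
proof -
  obtain K1 where K1: "K1 \<ge> 0" "\<forall>\<delta>. (\<forall>g\<in>G. 0 \<le> g \<bullet> \<delta>) \<longrightarrow> c \<bullet> \<delta> \<le> K1 * (a \<bullet> \<delta>)"
    using inner_le_multiple_on_cone[OF \<open>finite G\<close>, of a c] assms(2,3) by force
  obtain K2 where K2: "K2 \<ge> 0" "\<forall>\<delta>. (\<forall>g\<in>G. 0 \<le> g \<bullet> \<delta>) \<longrightarrow> - c \<bullet> \<delta> \<le> K2 * (a \<bullet> \<delta>)"
    using inner_le_multiple_on_cone[OF \<open>finite G\<close>, of a "- c"] assms(2,3) by force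
  have "\<bar>c \<bullet> \<delta>\<bar> \<le> max K1 K2 * (a \<bullet> \<delta>)" if "\<forall>g\<in>G. 0 \<le> g \<bullet> \<delta>" for \<delta>
    using K1(2) K2(2) that assms(2)[OF that] mult_right_mono[OF max.cobounded1, of "a \<bullet> \<delta>" K1 K2]
      mult_right_mono[OF max.cobounded2, of "a \<bullet> \<delta>" K2 K1]
    by (auto simp: abs_le_iff)
  with K1(1) show ?thesis
    by (intro exI[of _ "max K1 K2"]) auto
qed

lemma piecewise_linear_abs_le_multiple:
  fixes A C :: "'a::euclidean_space \<Rightarrow> real" and G :: "'s::finite \<Rightarrow> 'a set"
  assumes "\<And>\<sigma>. finite (G \<sigma>)"
    and cover: "\<And>\<delta>. \<exists>\<sigma>. \<forall>g\<in>G \<sigma>. 0 \<le> g \<bullet> \<delta>"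
    and linear_pieces: "\<And>\<sigma>. \<exists>a c. \<forall>\<delta>. (\<forall>g\<in>G \<sigma>. 0 \<le> g \<bullet> \<delta>) \<longrightarrow> A \<delta> = a \<bullet> \<delta> \<and> C \<delta> = c \<bullet> \<delta>"
    and nonneg: "\<And>\<delta>. 0 \<le> A \<delta>"
    and zero: "\<And>\<delta>. A \<delta> = 0 \<Longrightarrow> C \<delta> = 0"
  shows "\<exists>K\<ge>0. \<forall>\<delta>. \<bar>C \<delta>\<bar> \<le> K * A \<delta>"
proof -
  have "\<exists>K\<ge>0. \<forall>\<delta>. (\<forall>g\<in>G \<sigma>. 0 \<le> g \<bullet> \<delta>) \<longrightarrow> \<bar>C \<delta>\<bar> \<le> K * A \<delta>" for \<sigma>
  proof -
    obtain a c where ac: "\<forall>\<delta>. (\<forall>g\<in>G \<sigma>. 0 \<le> g \<bullet> \<delta>) \<longrightarrow> A \<delta> = a \<bullet> \<delta> \<and> C \<delta> = c \<bullet> \<delta>"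
      using linear_pieces by blast
    have "\<exists>K\<ge>0. \<forall>\<delta>. (\<forall>g\<in>G \<sigma>. 0 \<le> g \<bullet> \<delta>) \<longrightarrow> \<bar>c \<bullet> \<delta>\<bar> \<le> K * (a \<bullet> \<delta>)"
      using ac nonneg zero by (intro abs_inner_le_multiple_on_cone assms(1)) metis+
    with ac show ?thesis
      by auto
  qed
  then obtain K where K: "\<And>\<sigma>. K \<sigma> \<ge> 0" "\<And>\<sigma> \<delta>. \<forall>g\<in>G \<sigma>. 0 \<le> g \<bullet> \<delta> \<Longrightarrow> \<bar>C \<delta>\<bar> \<le> K \<sigma> * A \<delta>"
    by metis
  have "\<bar>C \<delta>\<bar> \<le> (\<Sum>\<sigma>\<in>UNIV. K \<sigma>) * A \<delta>" for \<delta>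
  proof -
    obtain \<sigma> where "\<forall>g\<in>G \<sigma>. 0 \<le> g \<bullet> \<delta>"
      using cover by blast
    then have "\<bar>C \<delta>\<bar> \<le> K \<sigma> * A \<delta>"
      by (rule K(2))
    also have "\<dots> \<le> (\<Sum>\<sigma>\<in>UNIV. K \<sigma>) * A \<delta>"
      using K(1) nonneg by (intro mult_right_mono member_le_sum) auto
    finally show ?thesis .
  qed
  with K(1) show ?thesis
    by (intro exI[of _ "\<Sum>\<sigma>\<in>UNIV. K \<sigma>"]) (auto intro: sum_nonneg)
qed

lemma leaky_deriv_sum_abs_le_multiple:
  fixes xs :: "'k::finite \<Rightarrow> 'a::euclidean_space" and \<alpha> \<beta> :: "'k \<Rightarrow> real"
  assumes "\<And>\<delta>. 0 \<le> (\<Sum>k\<in>UNIV. \<alpha> k * leaky_deriv ap am (w \<bullet> xs k) (\<delta> \<bullet> xs k))"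
    and "\<And>\<delta>. (\<Sum>k\<in>UNIV. \<alpha> k * leaky_deriv ap am (w \<bullet> xs k) (\<delta> \<bullet> xs k)) = 0
           \<Longrightarrow> (\<Sum>k\<in>UNIV. \<beta> k * leaky_deriv ap am (w \<bullet> xs k) (\<delta> \<bullet> xs k)) = 0"
  shows "\<exists>K\<ge>0. \<forall>\<delta>. \<bar>\<Sum>k\<in>UNIV. \<beta> k * leaky_deriv ap am (w \<bullet> xs k) (\<delta> \<bullet> xs k)\<bar>
           \<le> K * (\<Sum>k\<in>UNIV. \<alpha> k * leaky_deriv ap am (w \<bullet> xs k) (\<delta> \<bullet> xs k))"
proof (rule piecewise_linear_abs_le_multiple[OF _ _ _ assms])
  \<comment> \<open>A piece is given by the signs \<sigma> of the samples orthogonal to w; on it every term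
      leaky_deriv ap am (w \<bullet> xs k) (\<delta> \<bullet> xs k) is linear in \<delta>.\<close>
  define G where "G \<sigma> = (\<lambda>k. (if \<sigma> k then 1 else -1) *\<^sub>R xs k) ` {k. w \<bullet> xs k = 0}"
    for \<sigma> :: "'k \<Rightarrow> bool"
  show "finite (G \<sigma>)" for \<sigma>
    by (simp add: G_def)
  show "\<exists>\<sigma>. \<forall>g\<in>G \<sigma>. 0 \<le> g \<bullet> \<delta>" for \<delta>
    by (intro exI[of _ "\<lambda>k. 0 \<le> xs k \<bullet> \<delta>"]) (auto simp: G_def)
  show "\<exists>a c. \<forall>\<delta>. (\<forall>g\<in>G \<sigma>. 0 \<le> g \<bullet> \<delta>) \<longrightarrow>
      (\<Sum>k\<in>UNIV. \<alpha> k * leaky_deriv ap am (w \<bullet> xs k) (\<delta> \<bullet> xs k)) = a \<bullet> \<delta> \<and>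
      (\<Sum>k\<in>UNIV. \<beta> k * leaky_deriv ap am (w \<bullet> xs k) (\<delta> \<bullet> xs k)) = c \<bullet> \<delta>" for \<sigma>
  proof -
    define slope where "slope k = (if w \<bullet> xs k = 0 then (if \<sigma> k then ap else am)
        else (if w \<bullet> xs k > 0 then ap else am))" for k
    have on_piece: "leaky_deriv ap am (w \<bullet> xs k) (\<delta> \<bullet> xs k) = (slope k *\<^sub>R xs k) \<bullet> \<delta>"
      if "\<forall>g\<in>G \<sigma>. 0 \<le> g \<bullet> \<delta>" for \<delta> k
    proof (cases "w \<bullet> xs k = 0")
      case True
      with that have "0 \<le> ((if \<sigma> k then 1 else -1) *\<^sub>R xs k) \<bullet> \<delta>"
        by (auto simp: G_def)
      with True show ?thesis
        by (cases "\<sigma> k") (auto simp: leaky_deriv_def leaky_def slope_def inner_commute)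
    qed (auto simp: leaky_deriv_def slope_def inner_commute)
    show ?thesis
      by (rule exI[of _ "\<Sum>k\<in>UNIV. (\<alpha> k * slope k) *\<^sub>R xs k"],
          rule exI[of _ "\<Sum>k\<in>UNIV. (\<beta> k * slope k) *\<^sub>R xs k"])
        (simp add: on_piece inner_sum_left mult.assoc)
  qed
qed

lemma add_weighted_sum_nonneg:
  fixes c \<eta> :: "'j \<Rightarrow> real"
  assumes "finite J" and "0 \<le> A" and "\<And>j. j \<in> J \<Longrightarrow> \<bar>c j\<bar> \<le> K * A"
    and "(\<Sum>j\<in>J. \<bar>\<eta> j\<bar>) * K \<le> 1"
  shows "0 \<le> A + (\<Sum>j\<in>J. \<eta> j * c j)"
proof -
  have "\<bar>\<Sum>j\<in>J. \<eta> j * c j\<bar> \<le> (\<Sum>j\<in>J. \<bar>\<eta> j\<bar> * (K * A))"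
    using assms(3) by (intro order.trans[OF sum_abs] sum_mono) (simp add: abs_mult mult_left_mono)
  also have "\<dots> = ((\<Sum>j\<in>J. \<bar>\<eta> j\<bar>) * K) * A"
    by (simp add: sum_distrib_right mult.assoc)
  also have "\<dots> \<le> A"
    using mult_right_mono[OF assms(4,2)] by simp
  finally show ?thesis
    by linarith
qed

section \<open>Stationary points and local minima of the loss\<close>

lemma exists_tangential_decomposition:
  fixes w \<delta> :: "real^'n"
  shows "\<exists>a b v. 0 \<le> b \<and> \<delta> = a *\<^sub>R w + b *\<^sub>R v \<and> (b = 0 \<or> tangential w v)"
proof -
  define a where "a = (if w = 0 then 0 else (\<delta> \<bullet> w) / (w \<bullet> w))"
  define u where "u = \<delta> - a *\<^sub>R w"
  have "w \<noteq> 0 \<Longrightarrow> u \<bullet> w = 0"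
    by (simp add: u_def a_def inner_diff_left)
  then have "u \<noteq> 0 \<Longrightarrow> tangential w (u /\<^sub>R norm u)"
    by (simp add: tangential_def)
  moreover have "\<delta> = a *\<^sub>R w + norm u *\<^sub>R (u /\<^sub>R norm u)"
    by (cases "u = 0") (simp_all add: u_def)
  ultimately show ?thesis
    by (metis norm_ge_zero norm_zero)
qed

lemma norm_axis: "norm (axis i (x :: 'a::real_inner)) = norm x"
  by (simp add: norm_eq_sqrt_inner inner_axis_axis)

lemma exists_small_quadratic_neg:
  fixes a M \<epsilon> :: real
  assumes "a \<noteq> 0" and "0 < \<epsilon>"
  shows "\<exists>\<tau>. \<bar>\<tau>\<bar> < \<epsilon> \<and> \<tau> * a + \<tau>\<^sup>2 * M < 0"
proof -
  define t where "t = min (\<epsilon> / 2) (\<bar>a\<bar> / (\<bar>M\<bar> + 1))"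
  have t: "0 < t" "t < \<epsilon>" "t * \<bar>M\<bar> < \<bar>a\<bar>"
    using assms by (auto simp: t_def min_def field_simps)
  define \<tau> where "\<tau> = - sgn a * t"
  have "\<tau> * a + \<tau>\<^sup>2 * M \<le> t * (t * \<bar>M\<bar> - \<bar>a\<bar>)"
    using assms t by (auto simp: \<tau>_def power2_eq_square sgn_if algebra_simps abs_le_iff)
  also have "\<dots> < 0"
    using t by (simp add: mult_pos_neg)
  finally show ?thesis
    using t assms by (intro exI[of _ \<tau>]) (simp add: \<tau>_def abs_mult abs_sgn_eq)
qed

context
  fixes ap am :: real and xs :: "'k::finite \<Rightarrow> real^'n" and ys :: "'k \<Rightarrow> real^'j"
begin

definition resid_corr :: "((real^'n)^'i) \<times> (real^'i^'j) \<Rightarrow> 'j \<Rightarrow> real^'n \<Rightarrow> real" where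
  "resid_corr P j w = (\<Sum>k\<in>UNIV. resid ap am xs ys P k j * leaky ap am (w \<bullet> xs k))"

definition resid_corr_deriv ::
  "((real^'n)^'i) \<times> (real^'i^'j) \<Rightarrow> 'j \<Rightarrow> real^'n \<Rightarrow> real^'n \<Rightarrow> real" where
  "resid_corr_deriv P j w \<delta> =
     (\<Sum>k\<in>UNIV. resid ap am xs ys P k j * leaky_deriv ap am (w \<bullet> xs k) (\<delta> \<bullet> xs k))"

(* For a tangential direction v of w_i, neuron_deriv P i v is the paper's tangential derivative
   \<Sum>j h_ji d_ji^v \<bullet> v; see dvec_inner_self below. *)
definition neuron_deriv :: "((real^'n)^'i) \<times> (real^'i^'j) \<Rightarrow> 'i \<Rightarrow> real^'n \<Rightarrow> real" where
  "neuron_deriv P i \<delta> = (\<Sum>j\<in>UNIV. snd P $ j $ i * resid_corr_deriv P j (fst P $ i) \<delta>)"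

lemma resid_corr_deriv_0 [simp]: "resid_corr_deriv P j w 0 = 0"
  by (simp add: resid_corr_deriv_def)

lemma resid_corr_deriv_add_scaled:
  "0 \<le> b \<Longrightarrow> resid_corr_deriv P j w (a *\<^sub>R w + b *\<^sub>R v)
     = a * resid_corr P j w + b * resid_corr_deriv P j w v"
  by (simp add: resid_corr_deriv_def resid_corr_def inner_add_left leaky_deriv_add_scaled
      sum_distrib_left sum.distrib algebra_simps)

lemma loss_diff:
  "loss ap am xs ys Q - loss ap am xs ys P =
    (\<Sum>k\<in>UNIV. \<Sum>j\<in>UNIV.
       resid ap am xs ys P k j * (net_out ap am Q (xs k) $ j - net_out ap am P (xs k) $ j)
       + (net_out ap am Q (xs k) $ j - net_out ap am P (xs k) $ j)\<^sup>2 / 2)"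
proof -
  have "loss ap am xs ys Q - loss ap am xs ys P =
    (\<Sum>k\<in>UNIV. \<Sum>j\<in>UNIV. (net_out ap am Q (xs k) $ j - ys k $ j)\<^sup>2 / 2
        - (net_out ap am P (xs k) $ j - ys k $ j)\<^sup>2 / 2)"
    by (simp add: loss_def norm_vec_def L2_set_def sum_nonneg sum_subtractf sum_divide_distrib)
  also have "\<dots> = (\<Sum>k\<in>UNIV. \<Sum>j\<in>UNIV.
       resid ap am xs ys P k j * (net_out ap am Q (xs k) $ j - net_out ap am P (xs k) $ j)
       + (net_out ap am Q (xs k) $ j - net_out ap am P (xs k) $ j)\<^sup>2 / 2)"
    by (intro sum.cong refl) (simp add: resid_def power2_eq_square field_simps)
  finally show ?thesis .
qed

lemma sum_resid_expansion:
  "(\<Sum>k\<in>UNIV. \<Sum>j\<in>UNIV. resid ap am xs ys P k j *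
      (\<Sum>i\<in>UNIV. A j i * leaky_deriv ap am (fst P $ i \<bullet> xs k) (\<delta> i \<bullet> xs k)
                 + B j i * leaky ap am (fst P $ i \<bullet> xs k)))
   = (\<Sum>i\<in>UNIV. \<Sum>j\<in>UNIV. A j i * resid_corr_deriv P j (fst P $ i) (\<delta> i)
                 + B j i * resid_corr P j (fst P $ i))"
proof -
  define f where "f k j i = resid ap am xs ys P k j *
      (A j i * leaky_deriv ap am (fst P $ i \<bullet> xs k) (\<delta> i \<bullet> xs k)
                 + B j i * leaky ap am (fst P $ i \<bullet> xs k))" for k j i
  have "(\<Sum>k\<in>UNIV. \<Sum>j\<in>UNIV. \<Sum>i\<in>UNIV. f k j i) = (\<Sum>i\<in>UNIV. \<Sum>j\<in>UNIV. \<Sum>k\<in>UNIV. f k j i)"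
    by (subst sum.swap) (simp add: sum.swap[where A = "UNIV :: 'k set"])
  then show ?thesis
    by (simp add: f_def resid_corr_def resid_corr_deriv_def sum_distrib_left sum.distrib
        algebra_simps)
qed

definition loss_dir_deriv ::
  "((real^'n)^'i) \<times> (real^'i^'j) \<Rightarrow> ((real^'n)^'i) \<times> (real^'i^'j) \<Rightarrow> real" where
  "loss_dir_deriv P d =
    (\<Sum>i\<in>UNIV. neuron_deriv P i (fst d $ i) + (\<Sum>j\<in>UNIV. snd d $ j $ i * resid_corr P j (fst P $ i)))"

lemma tendsto_loss_dir_deriv:
  "((\<lambda>\<alpha>. (loss ap am xs ys (P + \<alpha> *\<^sub>R d) - loss ap am xs ys P) / \<alpha>) \<longlongrightarrow> loss_dir_deriv P d)
   (at_right 0)"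
proof -
  define p where "p k j = (\<Sum>i\<in>UNIV.
      snd P $ j $ i * leaky_deriv ap am (fst P $ i \<bullet> xs k) (fst d $ i \<bullet> xs k)
      + snd d $ j $ i * leaky ap am (fst P $ i \<bullet> xs k))" for k j
  define q where "q k j = (\<Sum>i\<in>UNIV.
      snd d $ j $ i * leaky_deriv ap am (fst P $ i \<bullet> xs k) (fst d $ i \<bullet> xs k))" for k j
  define r where "r k j = resid ap am xs ys P k j" for k j
  define F where "F \<alpha> =
    (\<Sum>k\<in>UNIV. \<Sum>j\<in>UNIV. r k j * (p k j + \<alpha> * q k j) + \<alpha> * (p k j + \<alpha> * q k j)\<^sup>2 / 2)" for \<alpha>
  from eventually_net_out_along_ray[of ap am P d xs] eventually_at_right_less[of "0::real"]
  have "\<forall>\<^sub>F \<alpha> in at_right 0. (loss ap am xs ys (P + \<alpha> *\<^sub>R d) - loss ap am xs ys P) / \<alpha> = F \<alpha>"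
  proof eventually_elim
    case (elim \<alpha>)
    then have "net_out ap am (P + \<alpha> *\<^sub>R d) (xs k) $ j - net_out ap am P (xs k) $ j
        = \<alpha> * (p k j + \<alpha> * q k j)" for k j
      by (simp add: p_def q_def power2_eq_square algebra_simps)
    then have "(loss ap am xs ys (P + \<alpha> *\<^sub>R d) - loss ap am xs ys P) / \<alpha>
      = (\<Sum>k\<in>UNIV. \<Sum>j\<in>UNIV.
           (r k j * (\<alpha> * (p k j + \<alpha> * q k j)) + (\<alpha> * (p k j + \<alpha> * q k j))\<^sup>2 / 2) / \<alpha>)"
      by (simp add: loss_diff r_def sum_divide_distrib)
    also have "\<dots> = F \<alpha>"
      unfolding F_def using elim by (intro sum.cong refl) (simp add: power2_eq_square field_simps)
    finally show ?case .
  qed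
  moreover have "(F \<longlongrightarrow> (\<Sum>k\<in>UNIV. \<Sum>j\<in>UNIV. r k j * p k j)) (at_right 0)"
    unfolding F_def by (intro tendsto_eq_intros) auto
  moreover have "(\<Sum>k\<in>UNIV. \<Sum>j\<in>UNIV. r k j * p k j) = loss_dir_deriv P d"
    unfolding r_def p_def sum_resid_expansion
    by (simp add: loss_dir_deriv_def neuron_deriv_def sum.distrib)
  ultimately show ?thesis
    by (simp add: tendsto_cong)
qed

lemma stationary_loss_dir_deriv_nonneg:
  assumes "stationary (loss ap am xs ys) P"
  shows "0 \<le> loss_dir_deriv P d"
proof -
  obtain l where "0 \<le> l"
    and lim: "((\<lambda>\<alpha>. (loss ap am xs ys (P + \<alpha> *\<^sub>R d) - loss ap am xs ys P) / \<alpha>) \<longlongrightarrow> l) (at_right 0)"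
    using assms unfolding stationary_def by blast
  with tendsto_unique[OF trivial_limit_at_right_real tendsto_loss_dir_deriv lim] show ?thesis
    by simp
qed

lemma stationary_resid_corr_eq_0:
  assumes "stationary (loss ap am xs ys) P"
  shows "resid_corr P j (fst P $ i) = 0"
proof -
  have axis_axis:
    "axis j (axis i c) $ j' $ i' * x = (if j' = j then (if i' = i then c * x else 0) else 0)"
    for c x :: real and j' i'
    by (simp add: axis_def)
  have "0 \<le> c * resid_corr P j (fst P $ i)" for c
    using stationary_loss_dir_deriv_nonneg[OF assms, of "(0, axis j (axis i c))"]
    by (simp add: loss_dir_deriv_def neuron_deriv_def axis_axis)
  from this[of 1] this[of "-1"] show ?thesis by simp
qed

lemma stationary_neuron_deriv_nonneg:
  assumes "stationary (loss ap am xs ys) P"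
  shows "0 \<le> neuron_deriv P i \<delta>"
proof -
  have "neuron_deriv P i' (axis i \<delta> $ i') = (if i' = i then neuron_deriv P i \<delta> else 0)" for i'
    by (cases "i' = i") (simp_all add: axis_def neuron_deriv_def)
  then show ?thesis
    using stationary_loss_dir_deriv_nonneg[OF assms, of "(axis i \<delta>, 0)"]
    by (simp add: loss_dir_deriv_def)
qed

lemma dvec_inner_self: "dvec ap am xs ys P j i v \<bullet> v = resid_corr_deriv P j (fst P $ i) v"
proof -
  define w where "w = fst P $ i"
  define Sp where "Sp = {k. 0 < w \<bullet> xs k \<or> w \<bullet> xs k = 0 \<and> 0 < v \<bullet> xs k}"
  define Sm where "Sm = {k. w \<bullet> xs k < 0 \<or> w \<bullet> xs k = 0 \<and> v \<bullet> xs k < 0}"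
  define E where "E = (\<Sum>k\<in>Sp. (ap * resid ap am xs ys P k j) *\<^sub>R xs k)
      + (\<Sum>k\<in>Sm. (am * resid ap am xs ys P k j) *\<^sub>R xs k)"
  have "\<forall>\<^sub>F \<Delta> in at_right 0. \<forall>k. (0 < w \<bullet> xs k + \<Delta> * (v \<bullet> xs k) \<longleftrightarrow> k \<in> Sp)
      \<and> (w \<bullet> xs k + \<Delta> * (v \<bullet> xs k) < 0 \<longleftrightarrow> k \<in> Sm)"
    unfolding Sp_def Sm_def mem_Collect_eq by (intro eventually_all_finite eventually_sign_right)
  then have "\<forall>\<^sub>F \<Delta> in at_right 0.
      (\<Sum>k\<in>{k. (w + \<Delta> *\<^sub>R v) \<bullet> xs k > 0}. (ap * resid ap am xs ys P k j) *\<^sub>R xs k)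
    + (\<Sum>k\<in>{k. (w + \<Delta> *\<^sub>R v) \<bullet> xs k < 0}. (am * resid ap am xs ys P k j) *\<^sub>R xs k) = E"
    by (rule eventually_mono) (simp add: E_def inner_add_left)
  then have "dvec ap am xs ys P j i v = E"
    unfolding dvec_def w_def[symmetric]
    by (intro tendsto_Lim trivial_limit_at_right_real tendsto_eventually)
  moreover have "E \<bullet> v = resid_corr_deriv P j w v"
  proof -
    have sum_Collect: "sum f {k. Q k} = (\<Sum>k\<in>UNIV. if Q k then f k else 0)"
      for f :: "'k \<Rightarrow> real" and Q
      using sum.inter_restrict[of UNIV f "{k. Q k}"] by simp
    show ?thesis
      unfolding E_def Sp_def Sm_def resid_corr_deriv_def
      by (simp add: sum_Collect inner_add_left inner_sum_left sum.distrib[symmetric])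
        (auto intro!: sum.cong simp: leaky_deriv_def leaky_def inner_commute)
  qed
  ultimately show ?thesis
    by (simp add: w_def)
qed

lemma not_escape_imp_resid_corr_deriv_eq_0:
  assumes "stationary (loss ap am xs ys) P" and "\<not> escape_neuron ap am xs ys P i"
    and "neuron_deriv P i \<delta> = 0"
  shows "resid_corr_deriv P j (fst P $ i) \<delta> = 0"
proof -
  obtain a b v where "0 \<le> b" and \<delta>: "\<delta> = a *\<^sub>R fst P $ i + b *\<^sub>R v"
    and "b = 0 \<or> tangential (fst P $ i) v"
    using exists_tangential_decomposition by blast
  have scaled: "resid_corr_deriv P j' (fst P $ i) \<delta> = b * resid_corr_deriv P j' (fst P $ i) v" for j'
    unfolding \<delta> resid_corr_deriv_add_scaled[OF \<open>0 \<le> b\<close>] stationary_resid_corr_eq_0[OF assms(1)]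
    by simp
  show ?thesis
  proof (cases "b = 0")
    case False
    with \<open>b = 0 \<or> tangential (fst P $ i) v\<close> have "tangential (fst P $ i) v"
      by simp
    have "b * neuron_deriv P i v = 0"
      using assms(3) by (simp add: neuron_deriv_def scaled sum_distrib_left algebra_simps)
    with False have "(\<Sum>j\<in>UNIV. snd P $ j $ i * (dvec ap am xs ys P j i v \<bullet> v)) = 0"
      by (simp add: neuron_deriv_def dvec_inner_self)
    with assms(2) \<open>tangential (fst P $ i) v\<close> have "resid_corr_deriv P j (fst P $ i) v = 0"
      unfolding escape_neuron_def dvec_inner_self by blast
    then show ?thesis
      by (simp add: scaled)
  qed (simp add: scaled)
qed

lemma not_escape_imp_resid_corr_deriv_le:
  assumes "stationary (loss ap am xs ys) P" and "\<not> escape_neuron ap am xs ys P i"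
  shows "\<exists>K\<ge>0. \<forall>\<delta>. \<bar>resid_corr_deriv P j (fst P $ i) \<delta>\<bar> \<le> K * neuron_deriv P i \<delta>"
proof -
  have neuron_deriv_eq: "neuron_deriv P i \<delta>
      = (\<Sum>k\<in>UNIV. (\<Sum>j\<in>UNIV. snd P $ j $ i * resid ap am xs ys P k j)
      * leaky_deriv ap am (fst P $ i \<bullet> xs k) (\<delta> \<bullet> xs k))" for \<delta>
    unfolding neuron_deriv_def resid_corr_deriv_def
    by (simp add: sum_distrib_left sum_distrib_right mult.assoc sum.swap[where A = "UNIV :: 'j set"])
  show ?thesis
    using stationary_neuron_deriv_nonneg[OF assms(1), of i]
      not_escape_imp_resid_corr_deriv_eq_0[OF assms]
    unfolding neuron_deriv_eq resid_corr_deriv_def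
    by (rule leaky_deriv_sum_abs_le_multiple)
qed

lemma no_escape_imp_resid_corr_deriv_le:
  assumes stat: "stationary (loss ap am xs ys) P" and "\<forall>i. \<not> escape_neuron ap am xs ys P i"
  shows "\<exists>K. \<forall>i j \<delta>. \<bar>resid_corr_deriv P j (fst P $ i) \<delta>\<bar> \<le> K * neuron_deriv P i \<delta>"
proof -
  have "\<forall>p. \<exists>K\<ge>0. \<forall>\<delta>. \<bar>resid_corr_deriv P (snd p) (fst P $ fst p) \<delta>\<bar> \<le> K * neuron_deriv P (fst p) \<delta>"
    using not_escape_imp_resid_corr_deriv_le[OF stat] assms(2) by blast
  then obtain K where K: "\<And>p. 0 \<le> K p"
    "\<And>p \<delta>. \<bar>resid_corr_deriv P (snd p) (fst P $ fst p) \<delta>\<bar> \<le> K p * neuron_deriv P (fst p) \<delta>"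
    by metis
  have "\<bar>resid_corr_deriv P j (fst P $ i) \<delta>\<bar> \<le> (\<Sum>p\<in>UNIV. K p) * neuron_deriv P i \<delta>" for i j \<delta>
    using K(2)[of "(i, j)" \<delta>] mult_right_mono[OF member_le_sum[of "(i, j)" UNIV K]]
      K(1) stationary_neuron_deriv_nonneg[OF stat, of i \<delta>]
    by fastforce
  then show ?thesis
    by blast
qed

lemma no_escape_imp_local_minimum:
  assumes stat: "stationary (loss ap am xs ys) P" and "\<forall>i. \<not> escape_neuron ap am xs ys P i"
  shows "local_minimum (loss ap am xs ys) P"
proof -
  obtain K where bound: "\<And>i j \<delta>. \<bar>resid_corr_deriv P j (fst P $ i) \<delta>\<bar> \<le> K * neuron_deriv P i \<delta>"
    using no_escape_imp_resid_corr_deriv_le[OF assms] by blast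
  have "((\<lambda>Q. (\<Sum>j\<in>UNIV. \<bar>snd Q $ j $ i - snd P $ j $ i\<bar>) * K) \<longlongrightarrow>
      (\<Sum>j\<in>UNIV. \<bar>snd P $ j $ i - snd P $ j $ i\<bar>) * K) (nhds P)" for i
    by (intro tendsto_intros filterlim_ident)
  then have lim: "((\<lambda>Q. (\<Sum>j\<in>UNIV. \<bar>snd Q $ j $ i - snd P $ j $ i\<bar>) * K) \<longlongrightarrow> 0) (nhds P)" for i
    by simp
  have "\<forall>\<^sub>F Q in nhds P. \<forall>i. (\<Sum>j\<in>UNIV. \<bar>snd Q $ j $ i - snd P $ j $ i\<bar>) * K < 1"
    by (intro eventually_all_finite order_tendstoD(2)[OF lim]) simp
  moreover note eventually_net_out_expansion[OF filterlim_ident, of ap am xs]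
  ultimately have "\<forall>\<^sub>F Q in nhds P. loss ap am xs ys P \<le> loss ap am xs ys Q"
  proof eventually_elim
    case (elim Q)
    define \<delta> where "\<delta> i = fst Q $ i - fst P $ i" for i
    define D where "D k j = net_out ap am Q (xs k) $ j - net_out ap am P (xs k) $ j" for k j
    have "(\<Sum>k\<in>UNIV. \<Sum>j\<in>UNIV. resid ap am xs ys P k j * D k j)
        = (\<Sum>i\<in>UNIV. \<Sum>j\<in>UNIV. snd Q $ j $ i * resid_corr_deriv P j (fst P $ i) (\<delta> i))"
      using elim(2) stationary_resid_corr_eq_0[OF stat]
      by (simp add: D_def \<delta>_def sum_resid_expansion)
    also have "\<dots> = (\<Sum>i\<in>UNIV. neuron_deriv P i (\<delta> i)
        + (\<Sum>j\<in>UNIV. (snd Q $ j $ i - snd P $ j $ i) * resid_corr_deriv P j (fst P $ i) (\<delta> i)))"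
      by (simp add: neuron_deriv_def sum.distrib[symmetric] algebra_simps)
    also have "0 \<le> \<dots>"
      using stationary_neuron_deriv_nonneg[OF stat] bound elim(1)
      by (intro sum_nonneg add_weighted_sum_nonneg) (auto intro: less_imp_le)
    also have "(\<Sum>k\<in>UNIV. \<Sum>j\<in>UNIV. resid ap am xs ys P k j * D k j)
        \<le> loss ap am xs ys Q - loss ap am xs ys P"
      unfolding loss_diff D_def[symmetric] by (intro sum_mono) simp
    finally show ?case
      by simp
  qed
  then show ?thesis
    unfolding local_minimum_def eventually_nhds_metric by blast
qed

lemma loss_rotate_and_switch_on:
  assumes stat: "stationary (loss ap am xs ys) P" and U: "(UNIV :: 'j set) = {j'}"
    and "snd P $ j' $ i = 0"
  shows "\<exists>r>0. \<forall>s \<tau>. 0 \<le> s \<longrightarrow> dist (fst P + axis i (s *\<^sub>R v), snd P + axis j' (axis i \<tau>)) P < r \<longrightarrow>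
    loss ap am xs ys (fst P + axis i (s *\<^sub>R v), snd P + axis j' (axis i \<tau>)) - loss ap am xs ys P
      = \<tau> * (s * resid_corr_deriv P j' (fst P $ i) v)
        + \<tau>\<^sup>2 * (\<Sum>k\<in>UNIV. (leaky ap am (fst P $ i \<bullet> xs k)
                         + s * leaky_deriv ap am (fst P $ i \<bullet> xs k) (v \<bullet> xs k))\<^sup>2 / 2)"
proof -
  obtain r where "0 < r" and expansion: "\<And>Q. dist Q P < r \<Longrightarrow> \<forall>k j.
      net_out ap am Q (xs k) $ j - net_out ap am P (xs k) $ j
      = (\<Sum>i'\<in>UNIV. snd Q $ j $ i'
            * leaky_deriv ap am (fst P $ i' \<bullet> xs k) ((fst Q $ i' - fst P $ i') \<bullet> xs k)
          + (snd Q $ j $ i' - snd P $ j $ i') * leaky ap am (fst P $ i' \<bullet> xs k))"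
    using eventually_net_out_expansion[OF filterlim_ident, of ap am xs P]
    unfolding eventually_nhds_metric by blast
  show ?thesis
  proof (intro exI[of _ r] conjI allI impI)
    fix s \<tau> :: real
    define Q where "Q = (fst P + axis i (s *\<^sub>R v), snd P + axis j' (axis i \<tau>))"
    define m where
      "m k = leaky ap am (fst P $ i \<bullet> xs k) + s * leaky_deriv ap am (fst P $ i \<bullet> xs k) (v \<bullet> xs k)" for k
    assume "0 \<le> s" and "dist Q P < r"
    have D: "net_out ap am Q (xs k) $ j - net_out ap am P (xs k) $ j = \<tau> * m k" for k j
    proof -
      have "snd Q $ j $ i'
            * leaky_deriv ap am (fst P $ i' \<bullet> xs k) ((fst Q $ i' - fst P $ i') \<bullet> xs k)
          + (snd Q $ j $ i' - snd P $ j $ i') * leaky ap am (fst P $ i' \<bullet> xs k)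
          = (if i' = i then \<tau> * m k else 0)" for i'
        using \<open>snd P $ j' $ i = 0\<close> \<open>0 \<le> s\<close> U
        by (cases "i' = i") (auto simp: Q_def axis_def m_def leaky_deriv_pos_mult algebra_simps)
      with expansion[OF \<open>dist Q P < r\<close>] show ?thesis
        by simp
    qed
    have "(\<Sum>k\<in>UNIV. resid ap am xs ys P k j' * m k) = s * resid_corr_deriv P j' (fst P $ i) v"
      using stationary_resid_corr_eq_0[OF stat, of j' i]
      by (simp add: m_def resid_corr_def resid_corr_deriv_def distrib_left sum.distrib sum_distrib_left
          mult.left_commute)
    moreover have "loss ap am xs ys Q - loss ap am xs ys P
        = \<tau> * (\<Sum>k\<in>UNIV. resid ap am xs ys P k j' * m k) + \<tau>\<^sup>2 * (\<Sum>k\<in>UNIV. (m k)\<^sup>2 / 2)"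
      by (simp add: loss_diff D U sum.distrib sum_distrib_left power_mult_distrib mult_ac)
    ultimately show "loss ap am xs ys Q - loss ap am xs ys P
      = \<tau> * (s * resid_corr_deriv P j' (fst P $ i) v) + \<tau>\<^sup>2 * (\<Sum>k\<in>UNIV. (m k)\<^sup>2 / 2)"
      by simp
  qed (rule \<open>0 < r\<close>)
qed

lemma escape_imp_not_local_minimum:
  assumes stat: "stationary (loss ap am xs ys) P" and "CARD('j) = 1"
    and "escape_neuron ap am xs ys P i"
  shows "\<not> local_minimum (loss ap am xs ys) P"
proof
  assume "local_minimum (loss ap am xs ys) P"
  then obtain e where "0 < e" and min: "\<And>Q. dist Q P < e \<Longrightarrow> loss ap am xs ys P \<le> loss ap am xs ys Q"
    unfolding local_minimum_def by blast
  obtain j' v where "tangential (fst P $ i) v"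
    and "(\<Sum>j\<in>UNIV. snd P $ j $ i * (dvec ap am xs ys P j i v \<bullet> v)) = 0"
    and "dvec ap am xs ys P j' i v \<bullet> v \<noteq> 0"
    using assms(3) unfolding escape_neuron_def by blast
  moreover have U: "(UNIV :: 'j set) = {j'}"
    using \<open>CARD('j) = 1\<close> by (metis UNIV_I card_1_singletonE singletonD)
  define c where "c = resid_corr_deriv P j' (fst P $ i) v"
  ultimately have "c \<noteq> 0" and "snd P $ j' $ i = 0"
    by (simp_all add: c_def dvec_inner_self U)
  obtain r where "0 < r" and switch: "\<And>s \<tau>. 0 \<le> s
      \<Longrightarrow> dist (fst P + axis i (s *\<^sub>R v), snd P + axis j' (axis i \<tau>)) P < r
      \<Longrightarrow> loss ap am xs ys (fst P + axis i (s *\<^sub>R v), snd P + axis j' (axis i \<tau>)) - loss ap am xs ys P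
        = \<tau> * (s * c) + \<tau>\<^sup>2 * (\<Sum>k\<in>UNIV. (leaky ap am (fst P $ i \<bullet> xs k)
                         + s * leaky_deriv ap am (fst P $ i \<bullet> xs k) (v \<bullet> xs k))\<^sup>2 / 2)"
    using loss_rotate_and_switch_on[OF stat U \<open>snd P $ j' $ i = 0\<close>, of v] unfolding c_def by blast
  define s where "s = min e r / 2"
  have "0 < s"
    using \<open>0 < e\<close> \<open>0 < r\<close> by (simp add: s_def)
  moreover have "s * c \<noteq> 0"
    using \<open>0 < s\<close> \<open>c \<noteq> 0\<close> by simp
  ultimately obtain \<tau> where "\<bar>\<tau>\<bar> < s"
    and neg: "\<tau> * (s * c) + \<tau>\<^sup>2 * (\<Sum>k\<in>UNIV. (leaky ap am (fst P $ i \<bullet> xs k)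
      + s * leaky_deriv ap am (fst P $ i \<bullet> xs k) (v \<bullet> xs k))\<^sup>2 / 2) < 0"
    using exists_small_quadratic_neg by blast
  define Q where "Q = (fst P + axis i (s *\<^sub>R v), snd P + axis j' (axis i \<tau>))"
  have "dist Q P \<le> norm (axis i (s *\<^sub>R v)) + norm (axis j' (axis i \<tau>))"
    unfolding dist_norm Q_def by (cases P) (simp add: norm_Pair_le)
  also have "\<dots> = s + \<bar>\<tau>\<bar>"
    using \<open>0 < s\<close> \<open>tangential (fst P $ i) v\<close> by (simp add: norm_axis tangential_def)
  also have "\<dots> < min e r"
    using \<open>\<bar>\<tau>\<bar> < s\<close> unfolding s_def by linarith
  finally have "dist Q P < e" and "dist Q P < r"
    by simp_all
  with switch[of s \<tau>] neg \<open>0 < s\<close> have "loss ap am xs ys Q < loss ap am xs ys P"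
    unfolding Q_def by simp
  with min[OF \<open>dist Q P < e\<close>] show False
    by simp
qed
end

theorem theorem1:
  fixes ap am :: real
    and xs :: "'k::finite \<Rightarrow> real^'n"
    and ys :: "'k \<Rightarrow> real^'j"
    and P :: "((real^'n)^'i) \<times> (real^'i^'j)"
  assumes "CARD('n) > 1"
    and "ap \<noteq> am"
    and "stationary (loss ap am xs ys) P"
  shows "((\<forall>i. \<not> escape_neuron ap am xs ys P i) \<longrightarrow> local_minimum (loss ap am xs ys) P)
    \<and> (CARD('j) = 1 \<longrightarrow> local_minimum (loss ap am xs ys) P
         \<longrightarrow> (\<forall>i. \<not> escape_neuron ap am xs ys P i))"
  using no_escape_imp_local_minimum[OF assms(3)] escape_imp_not_local_minimum[OF assms(3)]
  by blast

end
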